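(* Let $p>1$ and $\gamma=\frac{p-2}{2(p-1)}$. For $\alpha>0$, let $\phi$ be the maximal solution, on $[0,R_{\max})$ with $R_{\max}=R_{\max}(\alpha)\in(0,\infty]$, of $$\phi''=\tfrac12 y\phi'-\gamma\phi-|\phi'|^p\ (y>0),\qquad \phi(0)=0,\quad \phi'(0)=\alpha.$$ There exists $\alpha_0>0$ such that for every $\alpha\in(0,\alpha_0)$: $R_{\max}=\infty$, $\phi>0$ and $\phi'>0$ on $(0,\infty)$, and there exists $\bar R>0$ such that $\phi''<0$ on $[0,\bar R)$ and $\phi''>0$ on $(\bar R,\infty)$. *)

theory Defs
  imports "HOL-Analysis.Analysis"
begin

definition Ivl :: "ereal \<Rightarrow> real set" where
  "Ivl R = {y. 0 \<le> y \<and> ereal y < R}"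

definition gam :: "real \<Rightarrow> real" where
  "gam p = (p - 2) / (2 * (p - 1))"

definition is_sol :: "real \<Rightarrow> real \<Rightarrow> ereal \<Rightarrow> (real \<Rightarrow> real) \<Rightarrow> (real \<Rightarrow> real) \<Rightarrow> (real \<Rightarrow> real) \<Rightarrow> bool" where
  "is_sol p \<alpha> R phi d1 d2 \<longleftrightarrow> 0 < R \<and>
     (\<forall>y\<in>Ivl R. (phi has_real_derivative d1 y) (at y within Ivl R)
               \<and> (d1 has_real_derivative d2 y) (at y within Ivl R)) \<and>
     (\<forall>y\<in>Ivl R. 0 < y \<longrightarrow> d2 y = y / 2 * d1 y - gam p * phi y - \<bar>d1 y\<bar> powr p) \<and>
     phi 0 = 0 \<and> d1 0 = \<alpha>"

definition is_max_sol :: "real \<Rightarrow> real \<Rightarrow> ereal \<Rightarrow> (real \<Rightarrow> real) \<Rightarrow> (real \<Rightarrow> real) \<Rightarrow> (real \<Rightarrow> real) \<Rightarrow> bool" where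
  "is_max_sol p \<alpha> R phi d1 d2 \<longleftrightarrow> is_sol p \<alpha> R phi d1 d2 \<and>
     \<not> (\<exists>S psi e1 e2. R < S \<and> is_sol p \<alpha> S psi e1 e2 \<and> (\<forall>y\<in>Ivl R. psi y = phi y))"

end

theory Submission
  imports Defs
begin

text \<open>
  For small alpha the solution stays within a fraction of alpha of the line alpha y up to the turn point
  Y = K alpha^(p-1): on [0, Y] the drift of phi' is of order alpha * alpha^(2(p-1)).  At Y the linear
  terms y/2 phi' - gamma phi dominate |phi'|^p, so phi'' > 0 there, and phi'' stays positive afterwards
  because at every zero of phi'' its derivative equals (1/2 - gamma) phi' > 0.  Hence phi' > 0 and
  phi'' changes sign exactly once.  By Gronwall, phi + phi' grows at most exponentially, so a
  Picard solution of the system with |phi'| truncated above this bound solves the original problem on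
  every bounded interval; by uniqueness these solutions glue to a global one, which is then the only
  maximal solution.
\<close>

lemma first_zero:
  fixes u :: "real \<Rightarrow> real"
  assumes "a \<le> b" and cont: "continuous_on {a..b} u" and "0 < u a" "u b \<le> 0"
  obtains z where "a < z" "z \<le> b" "u z = 0" "\<And>t. a \<le> t \<Longrightarrow> t < z \<Longrightarrow> 0 < u t"
proof -
  define Z where "Z = {a..b} \<inter> u -` {0}"
  obtain x where x: "a \<le> x" "x \<le> b" "u x = 0"
    using IVT2'[of u b 0 a] assms by auto
  have "closed Z" unfolding Z_def by (rule continuous_closed_preimage[OF cont]) auto
  moreover have "x \<in> Z" "bdd_below Z" using x unfolding Z_def by auto
  ultimately have Z: "Inf Z \<in> Z" using closed_contains_Inf by blast
  have "0 < u t" if t: "a \<le> t" "t < Inf Z" for t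
  proof (rule ccontr)
    assume "\<not> 0 < u t"
    moreover have "continuous_on {a..t} u"
      using cont Z t unfolding Z_def by (auto intro: continuous_on_subset)
    ultimately obtain s where s: "a \<le> s" "s \<le> t" "u s = 0"
      using IVT2'[of u t 0 a] \<open>0 < u a\<close> t(1) by fastforce
    then have "s \<in> Z" using Z t unfolding Z_def by auto
    then have "Inf Z \<le> s" using \<open>bdd_below Z\<close> by (rule cInf_lower)
    then show False using s t by simp
  qed
  moreover have "Inf Z \<noteq> a" using Z \<open>0 < u a\<close> unfolding Z_def by auto
  then have "a < Inf Z" using Z unfolding Z_def by simp
  moreover have "Inf Z \<le> b" "u (Inf Z) = 0" using Z unfolding Z_def by simp_all
  ultimately show ?thesis using that by blast
qed

lemma pos_if_no_first_zero:
  fixes u :: "real \<Rightarrow> real"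
  assumes "a \<le> b" "continuous_on {a..b} u" "0 < u a"
    and no_first_zero: "\<And>z. a < z \<Longrightarrow> z \<le> b \<Longrightarrow> u z = 0 \<Longrightarrow> (\<And>t. a \<le> t \<Longrightarrow> t < z \<Longrightarrow> 0 < u t) \<Longrightarrow> False"
  shows "0 < u b"
proof (rule ccontr)
  assume "\<not> 0 < u b"
  then have "u b \<le> 0" by simp
  with first_zero[OF assms(1-3)] no_first_zero show False by metis
qed

lemma pos_if_zeros_upcrossing:
  fixes u :: "real \<Rightarrow> real"
  assumes "a \<le> b" "continuous_on {a..b} u" "0 < u a"
    and upcrossing: "\<And>z. a < z \<Longrightarrow> z \<le> b \<Longrightarrow> u z = 0 \<Longrightarrow> (\<And>t. a \<le> t \<Longrightarrow> t < z \<Longrightarrow> 0 < u t) \<Longrightarrow>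
                   \<exists>D>0. (u has_real_derivative D) (at z)"
  shows "0 < u b"
proof (rule pos_if_no_first_zero[OF assms(1-3)])
  fix z assume z: "a < z" "z \<le> b" "u z = 0" and before: "\<And>t. a \<le> t \<Longrightarrow> t < z \<Longrightarrow> 0 < u t"
  obtain d where "d > 0" and left: "\<And>h. 0 < h \<Longrightarrow> h < d \<Longrightarrow> u (z - h) < u z"
    using upcrossing[OF z before] DERIV_pos_inc_left by blast
  define h where "h = min d (z - a) / 2"
  have "0 < h" "h < d" "a \<le> z - h" using \<open>d > 0\<close> z by (auto simp: h_def min_def field_simps)
  then show False using left[of h] before[of "z - h"] z by simp
qed

lemma powr_lipschitz:
  fixes s t M p :: real
  assumes "1 \<le> p" "0 \<le> s" "0 \<le> t" "s \<le> M" "t \<le> M"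
  shows "\<bar>s powr p - t powr p\<bar> \<le> p * M powr (p - 1) * \<bar>s - t\<bar>"
proof -
  have increasing_case: "\<bar>s powr p - t powr p\<bar> \<le> p * M powr (p - 1) * \<bar>s - t\<bar>"
    if "0 \<le> t" "t < s" "s \<le> M" for s t
  proof -
    have cont: "continuous_on {t..s} (\<lambda>x. x powr p)"
      by (rule continuous_on_powr') (use assms that in \<open>auto intro: continuous_intros\<close>)
    have deriv: "DERIV (\<lambda>x. x powr p) x :> p * x powr (p - 1)" if "t < x" for x
      using DERIV_fun_powr[OF DERIV_ident, of x p] that \<open>0 \<le> t\<close> by simp
    obtain l z where z: "t < z" "z < s" "DERIV (\<lambda>x. x powr p) z :> l"
        "s powr p - t powr p = (s - t) * l"
      using MVT[OF \<open>t < s\<close> cont] deriv real_differentiable_def by (metis less_trans)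
    have l: "l = p * z powr (p - 1)" using DERIV_unique z(3) deriv z(1) by blast
    have "z powr (p - 1) \<le> M powr (p - 1)" using z that assms(1) by (intro powr_mono2) auto
    then show ?thesis
      using z that assms(1) unfolding l by (simp add: abs_mult mult.commute mult_left_mono mult_right_mono)
  qed
  show ?thesis
    using increasing_case[of t s] increasing_case[of s t] assms
    by (cases "t < s"; cases "s < t") (auto simp: abs_minus_commute)
qed

lemma powr_le_double:
  fixes a x p :: real
  assumes "0 < a" "\<bar>x\<bar> \<le> 2 * a" "0 \<le> p"
  shows "\<bar>x\<bar> powr p \<le> 2 powr p * (a * a powr (p - 1))"
proof -
  have "\<bar>x\<bar> powr p \<le> (2 * a) powr p" using assms by (intro powr_mono2) auto
  also have "\<dots> = 2 powr p * (a * a powr (p - 1))" using \<open>0 < a\<close> by (simp add: powr_mult powr_mult_base)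
  finally show ?thesis .
qed

lemma gronwall_deriv:
  fixes F F' :: "real \<Rightarrow> real"
  assumes "a \<le> b" "continuous_on {a..b} F"
    and deriv: "\<And>x. a < x \<Longrightarrow> x < b \<Longrightarrow> (F has_real_derivative F' x) (at x)"
    and growth: "\<And>x. a < x \<Longrightarrow> x < b \<Longrightarrow> F' x \<le> C * F x"
  shows "F b \<le> F a * exp (C * (b - a))"
proof -
  define G where "G x = exp (- C * x) * F x" for x
  have "G b \<le> G a"
  proof (rule DERIV_nonpos_imp_decreasing_open[OF \<open>a \<le> b\<close>])
    fix x assume x: "a < x" "x < b"
    have "(G has_real_derivative exp (- C * x) * (F' x - C * F x)) (at x)"
      unfolding G_def by (rule derivative_eq_intros refl deriv[OF x])+ (simp add: algebra_simps)
    moreover have "exp (- C * x) * (F' x - C * F x) \<le> 0"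
      using growth[OF x] by (simp add: mult_nonneg_nonpos)
    ultimately show "\<exists>y. (G has_real_derivative y) (at x) \<and> y \<le> 0" by blast
  next
    show "continuous_on {a..b} G" unfolding G_def by (intro continuous_intros assms(2))
  qed
  then have "exp (C * b) * G b \<le> exp (C * b) * G a" by simp
  moreover have "exp (C * b) * G b = F b" by (simp add: G_def exp_minus field_simps)
  moreover have "exp (C * b) * G a = F a * exp (C * (b - a))"
    by (simp add: G_def exp_minus right_diff_distrib exp_diff field_simps)
  ultimately show ?thesis by simp
qed

lemma integral_exp_weighted_bound:
  fixes g :: "real \<Rightarrow> 'a::banach"
  assumes "0 < \<Lambda>" "0 \<le> c" "0 \<le> K" "g integrable_on {0..c}"
    and bound: "\<And>s. s \<in> {0..c} \<Longrightarrow> norm (g s) \<le> K * exp (\<Lambda> * s)"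
  shows "exp (- \<Lambda> * c) * norm (integral {0..c} g) \<le> K / \<Lambda>"
proof -
  have exp_int: "((\<lambda>s. K * exp (\<Lambda> * s)) has_integral (K * exp (\<Lambda> * c) / \<Lambda> - K * exp (\<Lambda> * 0) / \<Lambda>)) {0..c}"
  proof (rule fundamental_theorem_of_calculus[OF \<open>0 \<le> c\<close>])
    fix x assume "x \<in> {0..c}"
    have "((\<lambda>s. K * exp (\<Lambda> * s) / \<Lambda>) has_real_derivative K * exp (\<Lambda> * x)) (at x within {0..c})"
      by (rule derivative_eq_intros refl)+ (use assms in \<open>auto simp: field_simps\<close>)
    then show "((\<lambda>s. K * exp (\<Lambda> * s) / \<Lambda>) has_vector_derivative K * exp (\<Lambda> * x)) (at x within {0..c})"
      by (simp add: has_real_derivative_iff_has_vector_derivative)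
  qed
  have "norm (integral {0..c} g) \<le> integral {0..c} (\<lambda>s. K * exp (\<Lambda> * s))"
    using integral_norm_bound_integral[OF \<open>g integrable_on {0..c}\<close> _ bound] exp_int by blast
  also have "\<dots> = K * exp (\<Lambda> * c) / \<Lambda> - K / \<Lambda>" using integral_unique[OF exp_int] by simp
  finally have "norm (integral {0..c} g) \<le> K * exp (\<Lambda> * c) / \<Lambda> - K / \<Lambda>" .
  then have "exp (- \<Lambda> * c) * norm (integral {0..c} g)
      \<le> exp (- \<Lambda> * c) * (K * exp (\<Lambda> * c) / \<Lambda> - K / \<Lambda>)"
    by (simp add: mult_left_mono)
  also have "\<dots> = K / \<Lambda> - exp (- \<Lambda> * c) * K / \<Lambda>"
    by (simp add: field_simps flip: exp_add)
  also have "\<dots> \<le> K / \<Lambda>" using assms by simp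
  finally show ?thesis .
qed

lemma picard_difference_bound:
  fixes f :: "real \<Rightarrow> 'a::banach \<Rightarrow> 'a" and z1 z2 :: "real \<Rightarrow> 'a"
  assumes "0 < L" "0 \<le> c" "0 \<le> d"
    and lipschitz: "\<And>s x y. s \<in> {0..c} \<Longrightarrow> norm (f s x - f s y) \<le> L * norm (x - y)"
    and int: "(\<lambda>s. f s (exp (2 * L * s) *\<^sub>R z1 s) - f s (exp (2 * L * s) *\<^sub>R z2 s)) integrable_on {0..c}"
    and close: "\<And>s. s \<in> {0..c} \<Longrightarrow> dist (z1 s) (z2 s) \<le> d"
  shows "exp (- (2 * L) * c) *
    norm (integral {0..c} (\<lambda>s. f s (exp (2 * L * s) *\<^sub>R z1 s) - f s (exp (2 * L * s) *\<^sub>R z2 s))) \<le> d / 2"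
proof -
  have "exp (- (2 * L) * c) *
      norm (integral {0..c} (\<lambda>s. f s (exp (2 * L * s) *\<^sub>R z1 s) - f s (exp (2 * L * s) *\<^sub>R z2 s)))
    \<le> L * d / (2 * L)"
  proof (rule integral_exp_weighted_bound[OF _ \<open>0 \<le> c\<close> _ int])
    fix s assume s: "s \<in> {0..c}"
    have "norm (f s (exp (2 * L * s) *\<^sub>R z1 s) - f s (exp (2 * L * s) *\<^sub>R z2 s))
        \<le> L * norm (exp (2 * L * s) *\<^sub>R (z1 s - z2 s))"
      unfolding scaleR_right_diff_distrib using s by (rule lipschitz)
    also have "\<dots> \<le> L * (exp (2 * L * s) * d)"
      using \<open>0 < L\<close> close[OF s] by (auto intro!: mult_left_mono simp: dist_norm)
    finally show "norm (f s (exp (2 * L * s) *\<^sub>R z1 s) - f s (exp (2 * L * s) *\<^sub>R z2 s))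
        \<le> L * d * exp (2 * L * s)" by (simp add: ac_simps)
  qed (use \<open>0 < L\<close> \<open>0 \<le> d\<close> in auto)
  then show ?thesis using \<open>0 < L\<close> by simp
qed

lemma weighted_picard_fixed_point:
  fixes f :: "real \<Rightarrow> 'a::banach \<Rightarrow> 'a"
  assumes "0 < T" "0 < L"
    and lipschitz: "\<And>s x y. s \<in> {0..T} \<Longrightarrow> norm (f s x - f s y) \<le> L * norm (x - y)"
    and cont: "\<And>w. continuous_on {0..T} w \<Longrightarrow> continuous_on {0..T} (\<lambda>s. f s (w s))"
  obtains z :: "real \<Rightarrow>\<^sub>C 'a" where "\<And>t. t \<in> {0..T} \<Longrightarrow>
    z t = exp (- (2 * L) * t) *\<^sub>R (x0 + integral {0..t} (\<lambda>s. f s (exp (2 * L * s) *\<^sub>R z s)))"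
proof -
  text \<open>The weight exp(-2 L t) makes the Picard operator a contraction with constant 1/2 in the
    sup norm, however large T is.\<close>
  define h where "h z s = f s (exp (2 * L * s) *\<^sub>R apply_bcontfun z s)" for z :: "real \<Rightarrow>\<^sub>C 'a" and s
  define G where "G z t = exp (- (2 * L) * t) *\<^sub>R (x0 + integral {0..t} (h z))" for z t
  have h_cont: "continuous_on {0..T} (h z)" for z
    unfolding h_def by (rule cont) (intro continuous_intros continuous_on_apply_bcontfun)
  have h_int: "h z integrable_on {0..c}" if "c \<in> {0..T}" for z c
    using h_cont[of z] that by (intro integrable_continuous_interval) (auto intro: continuous_on_subset)
  have "continuous_on (cbox 0 T) (G z)" for z
  proof -
    have "continuous_on {0..T} (\<lambda>t. integral {0..t} (h z))"
      by (rule indefinite_integral_continuous_1) (rule integrable_continuous_interval[OF h_cont])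
    then show ?thesis unfolding G_def by (auto intro!: continuous_intros)
  qed
  then have "\<forall>z. \<exists>g :: real \<Rightarrow>\<^sub>C 'a. \<forall>t. g t = G z (clamp 0 T t)"
    using continuous_on_cbox_bcontfunE by metis
  then obtain \<Phi> where \<Phi>: "\<And>z t. apply_bcontfun (\<Phi> z) t = G z (clamp 0 T t)" by metis
  have "dist (\<Phi> z1) (\<Phi> z2) \<le> 1/2 * dist z1 z2" for z1 z2
  proof (rule dist_bound)
    fix t
    define c where "c = clamp 0 T t"
    have c: "c \<in> {0..T}" using clamp_in_interval[of 0 T t] \<open>0 < T\<close> by (auto simp: c_def)
    have "G z1 c - G z2 c = exp (- (2 * L) * c) *\<^sub>R integral {0..c} (\<lambda>s. h z1 s - h z2 s)"
      unfolding G_def integral_diff[OF h_int[OF c] h_int[OF c]]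
      by (simp add: scaleR_right_diff_distrib scaleR_right_distrib)
    then have "dist (\<Phi> z1 t) (\<Phi> z2 t) = exp (- (2 * L) * c) * norm (integral {0..c} (\<lambda>s. h z1 s - h z2 s))"
      by (simp add: \<Phi> dist_norm c_def[symmetric])
    also have "\<dots> \<le> dist z1 z2 / 2"
      using integrable_diff[OF h_int[OF c, of z1] h_int[OF c, of z2]] c \<open>0 < L\<close>
      unfolding h_def by (intro picard_difference_bound) (auto intro: lipschitz dist_bounded)
    finally show "dist (\<Phi> z1 t) (\<Phi> z2 t) \<le> 1/2 * dist z1 z2" by simp
  qed
  then obtain z where "\<Phi> z = z" using banach_fix_type[of "1/2" \<Phi>] by auto
  then have "z t = G z t" if "t \<in> {0..T}" for t
    using \<Phi>[of z t] clamp_cancel_cbox[of t 0 T] that by simp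
  then show ?thesis by (intro that[of z]) (simp add: G_def h_def[abs_def])
qed

lemma lipschitz_ode_solution_exists:
  fixes f :: "real \<Rightarrow> 'a::banach \<Rightarrow> 'a"
  assumes "0 < T" "0 < L"
    and lipschitz: "\<And>s x y. s \<in> {0..T} \<Longrightarrow> norm (f s x - f s y) \<le> L * norm (x - y)"
    and cont: "\<And>w. continuous_on {0..T} w \<Longrightarrow> continuous_on {0..T} (\<lambda>s. f s (w s))"
  obtains x where "x 0 = x0" "\<And>t. t \<in> {0..T} \<Longrightarrow> (x has_vector_derivative f t (x t)) (at t within {0..T})"
proof -
  obtain z :: "real \<Rightarrow>\<^sub>C 'a" where z: "\<And>t. t \<in> {0..T} \<Longrightarrow>
      z t = exp (- (2 * L) * t) *\<^sub>R (x0 + integral {0..t} (\<lambda>s. f s (exp (2 * L * s) *\<^sub>R z s)))"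
    using weighted_picard_fixed_point[OF assms] by blast
  define h where "h s = f s (exp (2 * L * s) *\<^sub>R z s)" for s
  define x where "x t = x0 + integral {0..t} h" for t
  have h_cont: "continuous_on {0..T} h"
    unfolding h_def by (rule cont) (intro continuous_intros continuous_on_apply_bcontfun)
  show ?thesis
  proof
    show "x 0 = x0" unfolding x_def by simp
    fix t assume t: "t \<in> {0..T}"
    have "exp (2 * L * t) *\<^sub>R z t = x t"
      using z[OF t] by (simp add: x_def h_def[abs_def] exp_minus)
    then have "h t = f t (x t)" unfolding h_def by simp
    moreover have "((\<lambda>u. integral {0..u} h) has_vector_derivative h t) (at t within {0..T})"
      by (rule integral_has_vector_derivative[OF h_cont t])
    ultimately show "(x has_vector_derivative f t (x t)) (at t within {0..T})"
      unfolding x_def by (auto intro!: derivative_eq_intros)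
  qed
qed

lemma has_vector_derivative_fst:
  "(x has_vector_derivative v) F \<Longrightarrow> ((\<lambda>t. fst (x t)) has_vector_derivative fst v) F"
  unfolding has_vector_derivative_def by (drule has_derivative_fst) simp

lemma has_vector_derivative_snd:
  "(x has_vector_derivative v) F \<Longrightarrow> ((\<lambda>t. snd (x t)) has_vector_derivative snd v) F"
  unfolding has_vector_derivative_def by (drule has_derivative_snd) simp

lemma Ivl_ereal: "Ivl (ereal r) = {0..<r}"
  by (auto simp: Ivl_def)

lemma Ivl_infinity: "Ivl \<infinity> = {0..}"
  by (auto simp: Ivl_def)

lemma zero_in_Ivl: "0 < R \<Longrightarrow> 0 \<in> Ivl R"
  by (auto simp: Ivl_def zero_ereal_def)

lemma Ivl_nonneg: "y \<in> Ivl R \<Longrightarrow> 0 \<le> y"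
  by (auto simp: Ivl_def)

lemma atLeastAtMost_subset_Ivl: "y \<in> Ivl R \<Longrightarrow> 0 \<le> x \<Longrightarrow> {x..y} \<subseteq> Ivl R"
  by (auto simp: Ivl_def) (meson ereal_less_eq(3) order.strict_trans1)

lemma at_within_Ivl:
  assumes "y \<in> Ivl R" "0 < y"
  shows "at y within Ivl R = at y"
proof (cases R)
  case (real r)
  then show ?thesis using assms by (intro at_within_open_subset[of y "{0<..<r}"]) (auto simp: Ivl_def)
next
  case PInf
  then show ?thesis using assms by (intro at_within_open_subset[of y "{0<..}"]) (auto simp: Ivl_def)
next
  case MInf
  then show ?thesis using assms by (simp add: Ivl_def)
qed

lemma Ivl_contains_initial_interval:
  assumes "0 < R"
  obtains r where "0 < r" "{0..<r} \<subseteq> Ivl R"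
proof (cases R)
  case (real r)
  then show ?thesis using assms that[of r] by (simp add: Ivl_ereal)
next
  case PInf
  then show ?thesis by (intro that[of 1]) (auto simp: Ivl_infinity)
next
  case MInf
  then show ?thesis using assms by simp
qed

lemma gam_lt_half: "1 < p \<Longrightarrow> gam p < 1/2"
  by (simp add: gam_def divide_less_eq)

locale ode_sol =
  fixes p \<alpha> :: real and R :: ereal and phi d1 d2 :: "real \<Rightarrow> real"
  assumes p_gt_1: "1 < p" and sol: "is_sol p \<alpha> R phi d1 d2"
begin

lemma R_pos: "0 < R" and phi_0: "phi 0 = 0" and d1_0: "d1 0 = \<alpha>"
  using sol by (auto simp: is_sol_def)

lemma phi_deriv_within: "y \<in> Ivl R \<Longrightarrow> (phi has_real_derivative d1 y) (at y within Ivl R)"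
  and d1_deriv_within: "y \<in> Ivl R \<Longrightarrow> (d1 has_real_derivative d2 y) (at y within Ivl R)"
  using sol by (auto simp: is_sol_def)

lemma phi_deriv: "y \<in> Ivl R \<Longrightarrow> 0 < y \<Longrightarrow> (phi has_real_derivative d1 y) (at y)"
  and d1_deriv: "y \<in> Ivl R \<Longrightarrow> 0 < y \<Longrightarrow> (d1 has_real_derivative d2 y) (at y)"
  using phi_deriv_within d1_deriv_within at_within_Ivl by metis+

lemma continuous_on_phi: "continuous_on (Ivl R) phi"
  and continuous_on_d1: "continuous_on (Ivl R) d1"
  using DERIV_continuous_on phi_deriv_within d1_deriv_within by blast+

definition rhs :: "real \<Rightarrow> real" where
  "rhs y = y / 2 * d1 y - gam p * phi y - \<bar>d1 y\<bar> powr p"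

lemma d2_eq_rhs: "y \<in> Ivl R \<Longrightarrow> 0 < y \<Longrightarrow> d2 y = rhs y"
  using sol by (simp add: is_sol_def rhs_def)

lemma rhs_0: "rhs 0 = - (\<bar>\<alpha>\<bar> powr p)"
  by (simp add: rhs_def phi_0 d1_0)

lemma continuous_on_rhs: "continuous_on (Ivl R) rhs"
proof -
  have "0 < p" using p_gt_1 by simp
  then have "continuous_on (Ivl R) (\<lambda>y. \<bar>d1 y\<bar> powr p)"
    by (intro continuous_on_powr' continuous_intros continuous_on_d1) auto
  moreover have "continuous_on (Ivl R) (\<lambda>y. y / 2 * d1 y - gam p * phi y)"
    by (intro continuous_intros continuous_on_d1 continuous_on_phi) auto
  ultimately show ?thesis
    unfolding rhs_def[abs_def] by (rule continuous_on_diff[rotated])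
qed

lemma phi_mvt:
  assumes "0 \<le> a" "a < b" "b \<in> Ivl R"
  obtains x where "a < x" "x < b" "phi b - phi a = (b - a) * d1 x"
proof -
  have "continuous_on {a..b} phi"
    using continuous_on_phi atLeastAtMost_subset_Ivl[OF assms(3,1)] by (rule continuous_on_subset)
  moreover have "(phi has_real_derivative d1 x) (at x)" if "a < x" "x < b" for x
  proof (rule phi_deriv)
    show "x \<in> Ivl R" using atLeastAtMost_subset_Ivl[OF assms(3,1)] that by auto
  qed (use that assms(1) in simp)
  ultimately show ?thesis
    using MVT[OF \<open>a < b\<close>] DERIV_unique that real_differentiable_def by metis
qed

lemma d1_mvt:
  assumes "0 \<le> a" "a < b" "b \<in> Ivl R"
  obtains x where "a < x" "x < b" "d1 b - d1 a = (b - a) * rhs x"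
proof -
  have "continuous_on {a..b} d1"
    using continuous_on_d1 atLeastAtMost_subset_Ivl[OF assms(3,1)] by (rule continuous_on_subset)
  moreover have "(d1 has_real_derivative rhs x) (at x)" if "a < x" "x < b" for x
  proof -
    have "x \<in> Ivl R" "0 < x" using atLeastAtMost_subset_Ivl[OF assms(3,1)] that assms(1) by auto
    then show ?thesis using d1_deriv d2_eq_rhs by simp
  qed
  ultimately show ?thesis
    using MVT[OF \<open>a < b\<close>] DERIV_unique that real_differentiable_def by metis
qed

text \<open>At a zero of rhs the second derivative vanishes, so only the term (1/2 - gam p) d1
  of the derivative of rhs survives.\<close>
lemma rhs_deriv_pos_at_zero:
  assumes y: "y \<in> Ivl R" "0 < y" and "0 < d1 y" and "rhs y = 0"
  shows "\<exists>D>0. (rhs has_real_derivative D) (at y)"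
proof -
  have "eventually (\<lambda>t. 0 < d1 t) (at y)"
    using DERIV_isCont[OF d1_deriv[OF y]] \<open>0 < d1 y\<close> unfolding isCont_def by (rule order_tendstoD)
  then have "eventually (\<lambda>t. \<bar>d1 t\<bar> powr p = d1 t powr p) (at y)"
    by eventually_elim auto
  then have "((\<lambda>t. \<bar>d1 t\<bar> powr p) has_real_derivative p * d1 y powr (p - 1) * d2 y) (at y) \<longleftrightarrow>
      ((\<lambda>t. d1 t powr p) has_real_derivative p * d1 y powr (p - 1) * d2 y) (at y)"
    by (rule has_field_derivative_cong_eventually) (use \<open>0 < d1 y\<close> in simp)
  moreover have "((\<lambda>t. d1 t powr p) has_real_derivative p * d1 y powr (p - 1) * d2 y) (at y)"
    using DERIV_fun_powr[OF d1_deriv[OF y] \<open>0 < d1 y\<close>] by simp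
  ultimately have abs_powr: "((\<lambda>t. \<bar>d1 t\<bar> powr p) has_real_derivative p * d1 y powr (p - 1) * d2 y) (at y)"
    by simp
  have "((\<lambda>t. t / 2 * d1 t) has_real_derivative 1/2 * d1 y + y / 2 * d2 y) (at y)"
    using DERIV_mult[OF DERIV_cdivide[OF DERIV_ident, of 2] d1_deriv[OF y]] by (simp add: algebra_simps)
  from DERIV_diff[OF DERIV_diff[OF this DERIV_cmult[OF phi_deriv[OF y], of "gam p"]] abs_powr]
  have "(rhs has_real_derivative
      1/2 * d1 y + y / 2 * d2 y - gam p * d1 y - p * d1 y powr (p - 1) * d2 y) (at y)"
    unfolding rhs_def[abs_def] .
  moreover have "d2 y = 0" using d2_eq_rhs[OF y] \<open>rhs y = 0\<close> by simp
  moreover have "0 < (1/2 - gam p) * d1 y"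
    using \<open>0 < d1 y\<close> gam_lt_half[OF p_gt_1] by simp
  ultimately show ?thesis by (intro exI[of _ "(1/2 - gam p) * d1 y"]) (simp add: algebra_simps)
qed

text \<open>The equation is only imposed for y > 0; at 0, d2 is a one-sided derivative of d1, which the mean
  value theorem and continuity of rhs compare with rhs 0 = -alpha^p.\<close>
lemma d2_0_neg:
  assumes "0 < \<alpha>"
  shows "d2 0 < 0"
proof (rule ccontr)
  assume "\<not> d2 0 < 0"
  define w where "w = rhs 0 / 2"
  have "w < 0" using assms by (simp add: w_def rhs_0)
  have "\<exists>\<delta>>0. \<forall>t\<in>Ivl R. dist t 0 < \<delta> \<longrightarrow> dist (rhs t) (rhs 0) < - w"
    using continuous_on_rhs zero_in_Ivl[OF R_pos] \<open>w < 0\<close> unfolding continuous_on_iff by (metis neg_0_less_iff_less)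
  then obtain \<delta> where "0 < \<delta>" and \<delta>: "\<forall>t\<in>Ivl R. dist t 0 < \<delta> \<longrightarrow> dist (rhs t) (rhs 0) < - w"
    by blast
  have near_0: "rhs t < w" if "t \<in> Ivl R" "t < \<delta>" for t
  proof -
    have "dist t 0 < \<delta>" using that Ivl_nonneg[OF that(1)] by (simp add: dist_real_def)
    then have "\<bar>rhs t - rhs 0\<bar> < - w" using \<delta> that(1) by (simp add: dist_real_def)
    then show ?thesis unfolding w_def by linarith
  qed
  have "((\<lambda>t. d1 t - w * t) has_real_derivative d2 0 - w * 1) (at 0 within Ivl R)"
    using DERIV_diff[OF d1_deriv_within[OF zero_in_Ivl[OF R_pos]] DERIV_cmult[OF DERIV_ident, of w]] .
  moreover have "0 < d2 0 - w * 1" using \<open>\<not> d2 0 < 0\<close> \<open>w < 0\<close> by simp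
  ultimately obtain d where "0 < d"
    and increasing: "\<forall>h>0. 0 + h \<in> Ivl R \<longrightarrow> h < d \<longrightarrow> d1 0 - w * 0 < d1 (0 + h) - w * (0 + h)"
    using has_real_derivative_pos_inc_right by blast
  obtain r where "0 < r" "{0..<r} \<subseteq> Ivl R" using Ivl_contains_initial_interval[OF R_pos] .
  define h where "h = min d (min \<delta> r) / 2"
  have h: "0 < h" "h < d" "h < \<delta>" "h \<in> Ivl R"
    using \<open>0 < d\<close> \<open>0 < \<delta>\<close> \<open>0 < r\<close> \<open>{0..<r} \<subseteq> Ivl R\<close> by (auto simp: h_def min_def)
  obtain \<xi> where \<xi>: "0 < \<xi>" "\<xi> < h" "d1 h - d1 0 = (h - 0) * rhs \<xi>"
    using d1_mvt[OF order.refl h(1,4)] .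
  have "\<xi> \<in> Ivl R" using atLeastAtMost_subset_Ivl[OF h(4), of 0] \<xi> by auto
  then have "h * rhs \<xi> < h * w" using near_0 \<xi> h by simp
  moreover have "d1 0 < d1 h - h * w" using increasing h by (simp add: mult.commute)
  moreover have "d1 h - d1 0 = h * rhs \<xi>" using \<xi>(3) by simp
  ultimately show False by linarith
qed

lemma abs_phi_le:
  assumes "y \<in> Ivl R" and bound: "\<And>t. 0 \<le> t \<Longrightarrow> t < y \<Longrightarrow> \<bar>d1 t\<bar> \<le> B"
  shows "\<bar>phi y\<bar> \<le> B * y"
proof (cases "y = 0")
  case True
  then show ?thesis by (simp add: phi_0)
next
  case False
  then have "0 < y" using Ivl_nonneg[OF assms(1)] by simp
  then obtain \<eta> where "0 < \<eta>" "\<eta> < y" "phi y - phi 0 = (y - 0) * d1 \<eta>"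
    using phi_mvt[OF order.refl _ assms(1)] by blast
  then show ?thesis
    using bound[of \<eta>] \<open>0 < y\<close> by (simp add: phi_0 abs_mult mult.commute mult_left_mono)
qed

lemma abs_rhs_le:
  assumes "0 \<le> y" "y \<le> Y" "\<bar>d1 y\<bar> \<le> 2 * a" "\<bar>phi y\<bar> \<le> 2 * a * Y" "0 < a"
  shows "\<bar>rhs y\<bar> \<le> Y * a + \<bar>gam p\<bar> * (2 * a * Y) + 2 powr p * (a * a powr (p - 1))"
proof -
  have "\<bar>rhs y\<bar> \<le> y / 2 * \<bar>d1 y\<bar> + \<bar>gam p\<bar> * \<bar>phi y\<bar> + \<bar>d1 y\<bar> powr p"
    unfolding rhs_def using \<open>0 \<le> y\<close> by (simp add: abs_mult abs_triangle_ineq4 order.trans[OF abs_triangle_ineq4])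
  moreover have "y / 2 * \<bar>d1 y\<bar> \<le> Y / 2 * (2 * a)" using assms by (intro mult_mono) auto
  moreover have "\<bar>gam p\<bar> * \<bar>phi y\<bar> \<le> \<bar>gam p\<bar> * (2 * a * Y)" using assms by (intro mult_left_mono) auto
  moreover have "\<bar>d1 y\<bar> powr p \<le> 2 powr p * (a * a powr (p - 1))"
    using assms p_gt_1 by (intro powr_le_double) auto
  ultimately show ?thesis by simp
qed

end

section \<open>Uniqueness\<close>

lemma energy_estimate:
  fixes u v g x y \<gamma> L :: real
  assumes "0 \<le> x" "x \<le> y" "\<bar>g\<bar> \<le> L * \<bar>v\<bar>" "0 \<le> L"
  shows "2 * u * v + 2 * v * (x / 2 * v - \<gamma> * u - g) \<le> (1 + y + \<bar>\<gamma>\<bar> + 2 * L) * (u\<^sup>2 + v\<^sup>2)"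
proof -
  have uv: "2 * \<bar>u\<bar> * \<bar>v\<bar> \<le> u\<^sup>2 + v\<^sup>2" using sum_squares_bound[of "\<bar>u\<bar>" "\<bar>v\<bar>"] by (simp add: power2_eq_square)
  have "2 * u * v \<le> u\<^sup>2 + v\<^sup>2" using sum_squares_bound[of u v] by (simp add: power2_eq_square)
  moreover have "x * v\<^sup>2 \<le> y * (u\<^sup>2 + v\<^sup>2)" using assms by (intro mult_mono) auto
  moreover have "- (2 * \<gamma> * u * v) \<le> \<bar>\<gamma>\<bar> * (u\<^sup>2 + v\<^sup>2)"
  proof -
    have "- (2 * \<gamma> * u * v) \<le> \<bar>2 * \<gamma> * u * v\<bar>" by simp
    also have "\<dots> = \<bar>\<gamma>\<bar> * (2 * \<bar>u\<bar> * \<bar>v\<bar>)" by (simp add: abs_mult)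
    also have "\<dots> \<le> \<bar>\<gamma>\<bar> * (u\<^sup>2 + v\<^sup>2)" using uv by (intro mult_left_mono) auto
    finally show ?thesis .
  qed
  moreover have "- (2 * v * g) \<le> 2 * L * (u\<^sup>2 + v\<^sup>2)"
  proof -
    have "- (2 * v * g) \<le> \<bar>2 * v * g\<bar>" by simp
    also have "\<dots> = 2 * \<bar>v\<bar> * \<bar>g\<bar>" by (simp add: abs_mult)
    also have "\<dots> \<le> 2 * \<bar>v\<bar> * (L * \<bar>v\<bar>)" using assms(3) by (intro mult_left_mono) auto
    also have "\<dots> = 2 * L * v\<^sup>2" by (simp add: power2_eq_square)
    also have "\<dots> \<le> 2 * L * (u\<^sup>2 + v\<^sup>2)" using \<open>0 \<le> L\<close> by (intro mult_left_mono) auto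
    finally show ?thesis .
  qed
  moreover have "2 * u * v + 2 * v * (x / 2 * v - \<gamma> * u - g) = 2 * u * v + x * v\<^sup>2 - 2 * \<gamma> * u * v - 2 * v * g"
    by (simp add: algebra_simps power2_eq_square)
  moreover have "(1 + y + \<bar>\<gamma>\<bar> + 2 * L) * (u\<^sup>2 + v\<^sup>2)
      = (u\<^sup>2 + v\<^sup>2) + y * (u\<^sup>2 + v\<^sup>2) + \<bar>\<gamma>\<bar> * (u\<^sup>2 + v\<^sup>2) + 2 * L * (u\<^sup>2 + v\<^sup>2)"
    by (simp add: algebra_simps)
  ultimately show ?thesis by linarith
qed

lemma is_sol_unique:
  assumes "1 < p" and s1: "is_sol p \<alpha> R1 phi1 a1 b1" and s2: "is_sol p \<alpha> R2 phi2 a2 b2"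
    and y: "y \<in> Ivl R1" "y \<in> Ivl R2"
  shows "phi1 y = phi2 y \<and> a1 y = a2 y"
proof -
  interpret s1: ode_sol p \<alpha> R1 phi1 a1 b1 using assms by unfold_locales
  interpret s2: ode_sol p \<alpha> R2 phi2 a2 b2 using assms by unfold_locales
  have "0 \<le> y" using Ivl_nonneg y(1) .
  have sub: "{0..y} \<subseteq> Ivl R1" "{0..y} \<subseteq> Ivl R2" using atLeastAtMost_subset_Ivl y by auto
  note cont = continuous_on_subset[OF s1.continuous_on_phi sub(1)] continuous_on_subset[OF s1.continuous_on_d1 sub(1)]
    continuous_on_subset[OF s2.continuous_on_phi sub(2)] continuous_on_subset[OF s2.continuous_on_d1 sub(2)]
  have "continuous_on {0..y} (\<lambda>t. max \<bar>a1 t\<bar> \<bar>a2 t\<bar>)" by (intro continuous_intros cont)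
  then obtain M where "0 \<le> M" and M: "\<And>t. t \<in> {0..y} \<Longrightarrow> norm (max \<bar>a1 t\<bar> \<bar>a2 t\<bar>) \<le> M"
    using continuous_on_compact_bound[OF compact_Icc] by blast
  define L where "L = p * M powr (p - 1)"
  define E where "E t = (phi1 t - phi2 t)\<^sup>2 + (a1 t - a2 t)\<^sup>2" for t
  define E' where "E' t = 2 * (phi1 t - phi2 t) * (a1 t - a2 t) + 2 * (a1 t - a2 t) * (b1 t - b2 t)" for t
  have "E y \<le> E 0 * exp ((1 + y + \<bar>gam p\<bar> + 2 * L) * (y - 0))"
  proof (rule gronwall_deriv[where F' = E'])
    show "continuous_on {0..y} E" unfolding E_def by (intro continuous_intros cont)
    fix x assume x: "0 < x" "x < y"
    then have x12: "x \<in> Ivl R1" "x \<in> Ivl R2" using sub by auto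
    note derivs = s1.phi_deriv[OF x12(1) x(1)] s1.d1_deriv[OF x12(1) x(1)]
      s2.phi_deriv[OF x12(2) x(1)] s2.d1_deriv[OF x12(2) x(1)]
    show "(E has_real_derivative E' x) (at x)"
      unfolding E_def E'_def by (rule derivative_eq_intros refl derivs)+ (simp add: algebra_simps)
    have "\<bar>\<bar>a1 x\<bar> powr p - \<bar>a2 x\<bar> powr p\<bar> \<le> L * \<bar>\<bar>a1 x\<bar> - \<bar>a2 x\<bar>\<bar>"
      unfolding L_def using M[of x] x \<open>1 < p\<close> by (intro powr_lipschitz) auto
    also have "\<dots> \<le> L * \<bar>a1 x - a2 x\<bar>" unfolding L_def using \<open>1 < p\<close> by (intro mult_left_mono) auto
    finally have g: "\<bar>\<bar>a1 x\<bar> powr p - \<bar>a2 x\<bar> powr p\<bar> \<le> L * \<bar>a1 x - a2 x\<bar>" .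
    have diff: "b1 x - b2 x = x / 2 * (a1 x - a2 x) - gam p * (phi1 x - phi2 x) - (\<bar>a1 x\<bar> powr p - \<bar>a2 x\<bar> powr p)"
      unfolding s1.d2_eq_rhs[OF x12(1) x(1)] s2.d2_eq_rhs[OF x12(2) x(1)] s1.rhs_def s2.rhs_def
      by (simp add: right_diff_distrib)
    show "E' x \<le> (1 + y + \<bar>gam p\<bar> + 2 * L) * E x"
      unfolding E'_def E_def diff
      by (intro energy_estimate g) (use x \<open>1 < p\<close> in \<open>auto simp: L_def\<close>)
  qed (rule \<open>0 \<le> y\<close>)
  moreover have "E 0 = 0" by (simp add: E_def s1.phi_0 s2.phi_0 s1.d1_0 s2.d1_0)
  ultimately have "(phi1 y - phi2 y)\<^sup>2 + (a1 y - a2 y)\<^sup>2 \<le> 0" by (simp add: E_def)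
  then show ?thesis by (simp add: sum_power2_le_zero_iff)
qed

section \<open>Solutions with small initial slope\<close>

text \<open>With beta = alpha^(p-1) and Y = turn_point p alpha = turn_factor p * beta: on [0, Y] the drift
  |d1 - alpha| is at most alpha * beta^2 * drift_factor p, which stays below gam_gap p / 2 * alpha once
  beta < small_threshold p; turn_factor p is chosen so that rhs Y > 0.\<close>
definition gam_gap :: "real \<Rightarrow> real" where
  "gam_gap p = 1/2 - max (gam p) 0"

definition turn_factor :: "real \<Rightarrow> real" where
  "turn_factor p = 4 * 2 powr p / gam_gap p"

definition drift_factor :: "real \<Rightarrow> real" where
  "drift_factor p = (turn_factor p)\<^sup>2 * (1 + 2 * \<bar>gam p\<bar>) + turn_factor p * 2 powr p"

definition small_threshold :: "real \<Rightarrow> real" where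
  "small_threshold p = min 1 (gam_gap p / (4 * (drift_factor p + 1)))"

definition turn_point :: "real \<Rightarrow> real \<Rightarrow> real" where
  "turn_point p \<alpha> = turn_factor p * \<alpha> powr (p - 1)"

lemma gam_gap_pos: "1 < p \<Longrightarrow> 0 < gam_gap p"
  using gam_lt_half[of p] by (simp add: gam_gap_def max_def)

lemma gam_gap_le_half: "gam_gap p \<le> 1/2"
  by (simp add: gam_gap_def)

lemma turn_factor_pos: "1 < p \<Longrightarrow> 0 < turn_factor p"
  using gam_gap_pos by (simp add: turn_factor_def)

lemma small_threshold_pos: "1 < p \<Longrightarrow> 0 < small_threshold p"
  using gam_gap_pos turn_factor_pos[of p]
  by (simp add: small_threshold_def drift_factor_def add_nonneg_nonneg add_pos_nonneg)

lemma turn_point_pos: "1 < p \<Longrightarrow> 0 < \<alpha> \<Longrightarrow> 0 < turn_point p \<alpha>"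
  using turn_factor_pos by (simp add: turn_point_def)

lemma drift_lt_gam_gap:
  fixes p \<alpha> :: real
  defines "Y \<equiv> turn_point p \<alpha>"
  assumes "1 < p" "0 < \<alpha>" "\<alpha> powr (p - 1) < small_threshold p"
  shows "Y * (Y * \<alpha> + \<bar>gam p\<bar> * (2 * \<alpha> * Y) + 2 powr p * (\<alpha> * \<alpha> powr (p - 1))) < gam_gap p / 2 * \<alpha>"
proof -
  define \<beta> where "\<beta> = \<alpha> powr (p - 1)"
  define D where "D = drift_factor p"
  have "0 \<le> D" using turn_factor_pos[OF \<open>1 < p\<close>] by (simp add: D_def drift_factor_def)
  have "\<beta> < 1" "\<beta> < gam_gap p / (4 * (D + 1))"
    using assms(4) by (simp_all add: small_threshold_def \<beta>_def D_def)
  then have "\<beta> * (D + 1) < gam_gap p / 4"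
    using \<open>0 \<le> D\<close> by (simp add: less_divide_eq field_simps)
  moreover have "\<beta> * D \<le> \<beta> * (D + 1)" by (simp add: \<beta>_def distrib_left)
  ultimately have "\<beta> * D < gam_gap p / 2" using gam_gap_pos[OF \<open>1 < p\<close>] by linarith
  moreover have "\<beta> * \<beta> \<le> \<beta>" using \<open>\<beta> < 1\<close> by (intro mult_left_le) (simp_all add: \<beta>_def)
  then have "\<beta> * \<beta> * D \<le> \<beta> * D" using \<open>0 \<le> D\<close> by (rule mult_right_mono)
  moreover have "Y * (Y * \<alpha> + \<bar>gam p\<bar> * (2 * \<alpha> * Y) + 2 powr p * (\<alpha> * \<beta>)) = \<alpha> * (\<beta> * \<beta> * D)"
    by (simp add: Y_def turn_point_def D_def drift_factor_def \<beta>_def algebra_simps power2_eq_square)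
  ultimately show ?thesis using \<open>0 < \<alpha>\<close> by (simp add: \<beta>_def mult.commute)
qed

locale small_sol = ode_sol +
  assumes alpha_pos: "0 < \<alpha>" and alpha_small: "\<alpha> powr (p - 1) < small_threshold p"
begin

lemma d1_near_alpha:
  assumes y: "y \<in> Ivl R" "y \<le> turn_point p \<alpha>"
  shows "\<bar>d1 y - \<alpha>\<bar> < gam_gap p / 2 * \<alpha>"
proof -
  define Y where "Y = turn_point p \<alpha>"
  define u where "u t = gam_gap p / 2 * \<alpha> - \<bar>d1 t - \<alpha>\<bar>" for t
  have "0 < gam_gap p" "gam_gap p \<le> 1/2" using gam_gap_pos[OF p_gt_1] gam_gap_le_half .
  have "0 < u y"
  proof (rule pos_if_no_first_zero[of 0 y u])
    show "0 \<le> y" using Ivl_nonneg y(1) .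
    show "continuous_on {0..y} u" unfolding u_def
      by (intro continuous_intros continuous_on_subset[OF continuous_on_d1 atLeastAtMost_subset_Ivl[OF y(1)]]) simp
    show "0 < u 0" using \<open>0 < gam_gap p\<close> alpha_pos by (simp add: u_def d1_0)
  next
    fix z assume z: "0 < z" "z \<le> y" "u z = 0" and before: "\<And>t. 0 \<le> t \<Longrightarrow> t < z \<Longrightarrow> 0 < u t"
    have zR: "z \<in> Ivl R" using atLeastAtMost_subset_Ivl[OF y(1), of 0] z by auto
    have bound: "\<bar>d1 t\<bar> \<le> 2 * \<alpha>" if "0 \<le> t" "t < z" for t
    proof -
      have "gam_gap p / 2 * \<alpha> \<le> \<alpha>" using \<open>gam_gap p \<le> 1/2\<close> alpha_pos by simp
      then show ?thesis using before[OF that] unfolding u_def by linarith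
    qed
    obtain \<xi> where \<xi>: "0 < \<xi>" "\<xi> < z" "d1 z - d1 0 = (z - 0) * rhs \<xi>"
      using d1_mvt[OF order.refl z(1) zR] .
    have \<xi>R: "\<xi> \<in> Ivl R" using atLeastAtMost_subset_Ivl[OF zR, of 0] \<xi> by auto
    have "\<bar>phi \<xi>\<bar> \<le> 2 * \<alpha> * \<xi>" using abs_phi_le[OF \<xi>R] bound \<xi> by simp
    also have "\<dots> \<le> 2 * \<alpha> * Y" using \<xi> z y(2) alpha_pos by (simp add: Y_def)
    finally have "\<bar>rhs \<xi>\<bar> \<le> Y * \<alpha> + \<bar>gam p\<bar> * (2 * \<alpha> * Y) + 2 powr p * (\<alpha> * \<alpha> powr (p - 1))"
      using bound[of \<xi>] \<xi> z y(2) alpha_pos by (intro abs_rhs_le) (auto simp: Y_def)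
    then have "\<bar>d1 z - \<alpha>\<bar> \<le> Y * (Y * \<alpha> + \<bar>gam p\<bar> * (2 * \<alpha> * Y) + 2 powr p * (\<alpha> * \<alpha> powr (p - 1)))"
      using \<xi> z y(2) by (simp add: d1_0 abs_mult Y_def mult_mono)
    also have "\<dots> < gam_gap p / 2 * \<alpha>"
      using drift_lt_gam_gap[OF p_gt_1 alpha_pos alpha_small] unfolding Y_def .
    finally show False using z(3) unfolding u_def by simp
  qed
  then show ?thesis unfolding u_def by simp
qed

lemma d1_turn_point_bounds:
  assumes "y \<in> Ivl R" "y \<le> turn_point p \<alpha>"
  shows "(1 - gam_gap p / 2) * \<alpha> < d1 y" "d1 y < (1 + gam_gap p / 2) * \<alpha>" "0 < d1 y"
proof -
  have "gam_gap p / 2 * \<alpha> \<le> \<alpha> / 4" using gam_gap_le_half[of p] alpha_pos by simp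
  moreover have "d1 y - \<alpha> < gam_gap p / 2 * \<alpha> \<and> - (d1 y - \<alpha>) < gam_gap p / 2 * \<alpha>"
    using d1_near_alpha[OF assms] unfolding abs_less_iff .
  ultimately show "(1 - gam_gap p / 2) * \<alpha> < d1 y" "d1 y < (1 + gam_gap p / 2) * \<alpha>" "0 < d1 y"
    by (auto simp: algebra_simps)
qed

lemma rhs_turn_point_pos:
  assumes YR: "turn_point p \<alpha> \<in> Ivl R"
  shows "0 < rhs (turn_point p \<alpha>)"
proof -
  define Y where "Y = turn_point p \<alpha>"
  define c where "c = gam_gap p"
  define gp where "gp = max (gam p) 0"
  define X where "X = 2 powr p * (\<alpha> * \<alpha> powr (p - 1))"
  have "0 < Y" using turn_point_pos[OF p_gt_1 alpha_pos] by (simp add: Y_def)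
  have "0 < c" "gp = 1/2 - c" using gam_gap_pos[OF p_gt_1] by (simp_all add: c_def gp_def gam_gap_def)
  obtain \<eta> where \<eta>: "0 < \<eta>" "\<eta> < Y" "phi Y - phi 0 = (Y - 0) * d1 \<eta>"
    using phi_mvt[OF order.refl \<open>0 < Y\<close> YR[folded Y_def]] .
  have "\<eta> \<in> Ivl R" using atLeastAtMost_subset_Ivl[OF YR[folded Y_def], of 0] \<eta> by auto
  then have "0 < d1 \<eta>" "d1 \<eta> < (1 + c / 2) * \<alpha>"
    using d1_turn_point_bounds \<eta> by (auto simp: Y_def c_def)
  then have phiY: "0 \<le> phi Y" "phi Y \<le> Y * ((1 + c / 2) * \<alpha>)"
    using \<eta> \<open>0 < Y\<close> by (simp_all add: phi_0)
  have "gam p * phi Y \<le> gp * phi Y" using phiY by (intro mult_right_mono) (auto simp: gp_def)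
  also have "\<dots> \<le> gp * (Y * ((1 + c / 2) * \<alpha>))" using phiY by (intro mult_left_mono) (auto simp: gp_def)
  finally have gam_term: "gam p * phi Y \<le> gp * (Y * ((1 + c / 2) * \<alpha>))" .
  have d1Y: "(1 - c / 2) * \<alpha> < d1 Y" "0 < d1 Y" "d1 Y < (1 + c / 2) * \<alpha>"
    using d1_turn_point_bounds[OF YR] by (simp_all add: Y_def c_def)
  then have drift_term: "Y / 2 * ((1 - c / 2) * \<alpha>) \<le> Y / 2 * d1 Y"
    using \<open>0 < Y\<close> by (intro mult_left_mono) auto
  have "(1 + c / 2) * \<alpha> \<le> 2 * \<alpha>"
    using gam_gap_le_half[of p] alpha_pos by (intro mult_right_mono) (auto simp: c_def)
  then have "\<bar>d1 Y\<bar> \<le> 2 * \<alpha>" using d1Y by simp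
  then have power_term: "\<bar>d1 Y\<bar> powr p \<le> X"
    unfolding X_def using alpha_pos p_gt_1 by (intro powr_le_double) auto
  have "Y / 2 * ((1 - c / 2) * \<alpha>) - gp * (Y * ((1 + c / 2) * \<alpha>)) - X \<le> rhs Y"
    unfolding rhs_def using gam_term drift_term power_term by linarith
  moreover have "Y / 2 * ((1 - c / 2) * \<alpha>) - gp * (Y * ((1 + c / 2) * \<alpha>)) = Y * \<alpha> * (c / 2) + Y * \<alpha> * (c\<^sup>2 / 2)"
    unfolding \<open>gp = 1/2 - c\<close> by (simp add: field_simps power2_eq_square)
  moreover have "0 \<le> Y * \<alpha> * (c\<^sup>2 / 2)" using \<open>0 < Y\<close> alpha_pos by simp
  moreover have "Y * \<alpha> * (c / 2) = 2 * X"
    using \<open>0 < c\<close> by (simp add: Y_def X_def c_def turn_point_def turn_factor_def)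
  moreover have "0 < X" using alpha_pos by (simp add: X_def)
  ultimately show ?thesis unfolding Y_def by linarith
qed


lemma rhs_pos_beyond_turn_point:
  assumes y: "y \<in> Ivl R" "turn_point p \<alpha> \<le> y"
  shows "0 < rhs y"
proof -
  define Y where "Y = turn_point p \<alpha>"
  have "0 < Y" using turn_point_pos[OF p_gt_1 alpha_pos] by (simp add: Y_def)
  have YR: "Y \<in> Ivl R" using atLeastAtMost_subset_Ivl[OF y(1), of Y] y(2) \<open>0 < Y\<close> by (auto simp: Y_def)
  have "0 < d1 Y" using d1_turn_point_bounds(3)[OF YR] by (simp add: Y_def)
  show ?thesis
  proof (rule pos_if_zeros_upcrossing[of Y y rhs])
    show "Y \<le> y" using y(2) by (simp add: Y_def)
    show "continuous_on {Y..y} rhs"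
      using continuous_on_rhs atLeastAtMost_subset_Ivl[OF y(1)] \<open>0 < Y\<close> by (meson continuous_on_subset less_imp_le)
    show "0 < rhs Y" using rhs_turn_point_pos YR by (simp add: Y_def)
  next
    fix z assume z: "Y < z" "z \<le> y" "rhs z = 0" and before: "\<And>t. Y \<le> t \<Longrightarrow> t < z \<Longrightarrow> 0 < rhs t"
    have "0 < z" using z \<open>0 < Y\<close> by simp
    have zR: "z \<in> Ivl R" using atLeastAtMost_subset_Ivl[OF y(1), of 0] z \<open>0 < z\<close> by auto
    obtain \<xi> where \<xi>: "Y < \<xi>" "\<xi> < z" "d1 z - d1 Y = (z - Y) * rhs \<xi>"
      using d1_mvt[OF _ z(1) zR] \<open>0 < Y\<close> by auto
    moreover have "0 < (z - Y) * rhs \<xi>" using before[of \<xi>] \<xi> by simp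
    ultimately have "d1 Y < d1 z" by linarith
    then show "\<exists>D>0. (rhs has_real_derivative D) (at z)"
      using rhs_deriv_pos_at_zero[OF zR \<open>0 < z\<close> _ z(3)] \<open>0 < d1 Y\<close> by simp
  qed
qed

lemma d1_pos:
  assumes y: "y \<in> Ivl R"
  shows "0 < d1 y"
proof (cases "y \<le> turn_point p \<alpha>")
  case True
  then show ?thesis using d1_turn_point_bounds(3) y by blast
next
  case False
  define Y where "Y = turn_point p \<alpha>"
  have "0 < Y" using turn_point_pos[OF p_gt_1 alpha_pos] by (simp add: Y_def)
  have YR: "Y \<in> Ivl R" using atLeastAtMost_subset_Ivl[OF y, of Y] False \<open>0 < Y\<close> by (auto simp: Y_def)
  obtain \<xi> where \<xi>: "Y < \<xi>" "\<xi> < y" "d1 y - d1 Y = (y - Y) * rhs \<xi>"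
    using d1_mvt[OF _ _ y, of Y] \<open>0 < Y\<close> False by (auto simp: Y_def)
  have "\<xi> \<in> Ivl R" using atLeastAtMost_subset_Ivl[OF y, of 0] \<xi> \<open>0 < Y\<close> by auto
  then have "0 < rhs \<xi>" using rhs_pos_beyond_turn_point \<xi> by (simp add: Y_def)
  then have "0 < (y - Y) * rhs \<xi>" using \<xi> by simp
  moreover have "0 < d1 Y" using d1_turn_point_bounds(3)[OF YR] by (simp add: Y_def)
  ultimately show ?thesis using \<xi>(3) by linarith
qed

lemma phi_pos:
  assumes "y \<in> Ivl R" "0 < y"
  shows "0 < phi y"
proof -
  obtain \<eta> where \<eta>: "0 < \<eta>" "\<eta> < y" "phi y - phi 0 = (y - 0) * d1 \<eta>"
    using phi_mvt[OF order.refl assms(2,1)] .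
  have "\<eta> \<in> Ivl R" using atLeastAtMost_subset_Ivl[OF assms(1), of 0] \<eta> by auto
  then show ?thesis using d1_pos \<eta> assms(2) by (simp add: phi_0)
qed

lemma phi_nonneg: "y \<in> Ivl R \<Longrightarrow> 0 \<le> phi y"
  using phi_pos[of y] Ivl_nonneg[of y R] phi_0 by (cases "y = 0") auto

lemma d1_le_exp:
  assumes y: "y \<in> Ivl R" "y \<le> T"
  shows "d1 y \<le> \<alpha> * exp ((1 + T / 2 + \<bar>gam p\<bar>) * T)"
proof -
  define k where "k = 1 + T / 2 + \<bar>gam p\<bar>"
  have "0 \<le> y" using Ivl_nonneg y(1) .
  then have "0 < k" using y(2) by (simp add: k_def add_pos_nonneg)
  have sub: "{0..y} \<subseteq> Ivl R" using atLeastAtMost_subset_Ivl[OF y(1)] by simp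
  have "phi y + d1 y \<le> (phi 0 + d1 0) * exp (k * (y - 0))"
  proof (rule gronwall_deriv[where F' = "\<lambda>x. d1 x + d2 x"])
    show "continuous_on {0..y} (\<lambda>x. phi x + d1 x)"
      using sub by (intro continuous_intros continuous_on_subset[OF continuous_on_phi] continuous_on_subset[OF continuous_on_d1])
    fix x assume x: "0 < x" "x < y"
    then have xR: "x \<in> Ivl R" using sub by auto
    show "((\<lambda>x. phi x + d1 x) has_real_derivative d1 x + d2 x) (at x)"
      using DERIV_add[OF phi_deriv[OF xR x(1)] d1_deriv[OF xR x(1)]] .
    have "0 \<le> phi x" "0 < d1 x" using phi_nonneg[OF xR] d1_pos[OF xR] .
    have "x / 2 * d1 x \<le> T / 2 * d1 x" using x y(2) \<open>0 < d1 x\<close> by (intro mult_right_mono) auto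
    moreover have "- (gam p * phi x) \<le> \<bar>gam p\<bar> * phi x"
      using mult_right_mono[OF abs_ge_minus_self \<open>0 \<le> phi x\<close>] by simp
    ultimately have "d2 x \<le> T / 2 * d1 x + \<bar>gam p\<bar> * phi x"
      unfolding d2_eq_rhs[OF xR x(1)] rhs_def by (smt (verit) powr_ge_zero)
    moreover have "k * (phi x + d1 x) = phi x + d1 x + T / 2 * phi x + T / 2 * d1 x + \<bar>gam p\<bar> * phi x + \<bar>gam p\<bar> * d1 x"
      by (simp add: k_def algebra_simps)
    moreover have "0 \<le> T / 2 * phi x" "0 \<le> \<bar>gam p\<bar> * d1 x" using \<open>0 \<le> phi x\<close> \<open>0 < d1 x\<close> x y(2) by auto
    ultimately show "d1 x + d2 x \<le> k * (phi x + d1 x)" using \<open>0 \<le> phi x\<close> by linarith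
  qed (rule \<open>0 \<le> y\<close>)
  then have "d1 y \<le> \<alpha> * exp (k * y)" using phi_nonneg[OF y(1)] by (simp add: phi_0 d1_0)
  also have "\<dots> \<le> \<alpha> * exp (k * T)" using \<open>0 < k\<close> y(2) alpha_pos by simp
  finally show ?thesis unfolding k_def .
qed

lemma rhs_pos_after_zero:
  assumes z: "z \<in> Ivl R" "0 < z" "rhs z = 0" and y: "y \<in> Ivl R" "z < y"
  shows "0 < rhs y"
proof -
  obtain D where "0 < D" "(rhs has_real_derivative D) (at z)"
    using rhs_deriv_pos_at_zero[OF z(1,2) d1_pos[OF z(1)] z(3)] by blast
  then obtain d where "0 < d" and right: "\<And>h. 0 < h \<Longrightarrow> h < d \<Longrightarrow> rhs z < rhs (z + h)"
    using DERIV_pos_inc_right by blast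
  define a where "a = min y (z + d / 2)"
  have a: "z < a" "a \<le> y" "0 < rhs a"
    using right[of "a - z"] \<open>0 < d\<close> y z(3) by (auto simp: a_def min_def)
  show ?thesis
  proof (rule pos_if_zeros_upcrossing[of a y rhs])
    show "continuous_on {a..y} rhs"
      using continuous_on_rhs atLeastAtMost_subset_Ivl[OF y(1), of a] a z(2) by (auto intro: continuous_on_subset)
  next
    fix x assume x: "a < x" "x \<le> y" "rhs x = 0"
    have "0 < x" "x \<in> Ivl R" using atLeastAtMost_subset_Ivl[OF y(1), of 0] x a z(2) by auto
    then show "\<exists>D>0. (rhs has_real_derivative D) (at x)"
      using rhs_deriv_pos_at_zero d1_pos x(3) by blast
  qed (use a in auto)
qed

lemma d2_sign_change:
  assumes "turn_point p \<alpha> \<in> Ivl R"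
  obtains Rb where "0 < Rb" "\<And>y. 0 \<le> y \<Longrightarrow> y < Rb \<Longrightarrow> d2 y < 0" "\<And>y. y \<in> Ivl R \<Longrightarrow> Rb < y \<Longrightarrow> 0 < d2 y"
proof -
  define Y where "Y = turn_point p \<alpha>"
  have YR: "Y \<in> Ivl R" using assms by (simp add: Y_def)
  have "0 < Y" using turn_point_pos[OF p_gt_1 alpha_pos] by (simp add: Y_def)
  have "continuous_on {0..Y} (\<lambda>t. - rhs t)"
    using continuous_on_rhs atLeastAtMost_subset_Ivl[OF YR] by (auto intro: continuous_intros continuous_on_subset)
  moreover have "0 < - rhs 0" using alpha_pos by (simp add: rhs_0)
  moreover have "- rhs Y \<le> 0" using rhs_turn_point_pos[OF assms] by (simp add: Y_def)
  ultimately obtain Rb where Rb: "0 < Rb" "Rb \<le> Y" "rhs Rb = 0"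
    and neg: "\<And>t. 0 \<le> t \<Longrightarrow> t < Rb \<Longrightarrow> rhs t < 0"
    using first_zero[of 0 Y "\<lambda>t. - rhs t"] \<open>0 < Y\<close> by auto
  have RbR: "Rb \<in> Ivl R" using atLeastAtMost_subset_Ivl[OF YR, of 0] Rb by auto
  show ?thesis
  proof (rule that[OF Rb(1)])
    fix y assume y: "0 \<le> y" "y < Rb"
    show "d2 y < 0"
    proof (cases "y = 0")
      case True
      then show ?thesis using d2_0_neg[OF alpha_pos] by simp
    next
      case False
      then have "y \<in> Ivl R" "0 < y" using atLeastAtMost_subset_Ivl[OF RbR, of 0] y by auto
      then show ?thesis using d2_eq_rhs neg y by simp
    qed
  next
    fix y assume "y \<in> Ivl R" "Rb < y"
    then show "0 < d2 y" using rhs_pos_after_zero[OF RbR Rb(1,3)] d2_eq_rhs Rb(1) by simp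
  qed
qed

end

section \<open>Existence\<close>

text \<open>The first-order system for (phi, phi') with |phi'| capped at M, which makes it globally Lipschitz.\<close>
definition truncated_field :: "real \<Rightarrow> real \<Rightarrow> real \<Rightarrow> real \<times> real \<Rightarrow> real \<times> real" where
  "truncated_field p M s w = (snd w, s / 2 * snd w - gam p * fst w - min \<bar>snd w\<bar> M powr p)"

lemma truncated_field_lipschitz:
  assumes "1 \<le> p" "0 \<le> M" "0 \<le> s" "s \<le> T"
  shows "norm (truncated_field p M s a - truncated_field p M s b)
    \<le> (1 + T / 2 + \<bar>gam p\<bar> + p * M powr (p - 1)) * norm (a - b)"
proof -
  define du dv where "du = fst a - fst b" and "dv = snd a - snd b"
  define L where "L = p * M powr (p - 1)"
  define G where "G = min \<bar>snd a\<bar> M powr p - min \<bar>snd b\<bar> M powr p"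
  have "a - b = (du, dv)" by (simp add: du_def dv_def prod_eq_iff)
  then have "\<bar>du\<bar> \<le> norm (a - b)" "\<bar>dv\<bar> \<le> norm (a - b)"
    using norm_fst_le[of du dv] norm_snd_le[of dv du] by simp_all
  have "\<bar>G\<bar> \<le> L * \<bar>min \<bar>snd a\<bar> M - min \<bar>snd b\<bar> M\<bar>"
    unfolding G_def L_def using assms by (intro powr_lipschitz) auto
  also have "\<dots> \<le> L * \<bar>dv\<bar>" unfolding L_def dv_def using assms by (intro mult_left_mono) (auto simp: min_def)
  finally have "\<bar>G\<bar> \<le> L * \<bar>dv\<bar>" .
  have "truncated_field p M s a - truncated_field p M s b = (dv, s / 2 * dv - gam p * du - G)"
    by (simp add: truncated_field_def du_def dv_def G_def right_diff_distrib)
  then have "norm (truncated_field p M s a - truncated_field p M s b) \<le> \<bar>dv\<bar> + \<bar>s / 2 * dv - gam p * du - G\<bar>"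
    using norm_Pair_le[of dv "s / 2 * dv - gam p * du - G"] by simp
  also have "\<dots> \<le> \<bar>dv\<bar> + (s / 2 * \<bar>dv\<bar> + \<bar>gam p\<bar> * \<bar>du\<bar> + \<bar>G\<bar>)"
    using \<open>0 \<le> s\<close> by (simp add: abs_mult abs_triangle_ineq4 order.trans[OF abs_triangle_ineq4])
  also have "\<dots> \<le> (1 + T / 2 + \<bar>gam p\<bar> + L) * norm (a - b)"
  proof -
    have "s / 2 * \<bar>dv\<bar> \<le> T / 2 * norm (a - b)" using assms \<open>\<bar>dv\<bar> \<le> norm (a - b)\<close> by (intro mult_mono) auto
    moreover have "\<bar>gam p\<bar> * \<bar>du\<bar> \<le> \<bar>gam p\<bar> * norm (a - b)" using \<open>\<bar>du\<bar> \<le> norm (a - b)\<close> by (intro mult_left_mono) auto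
    moreover have "L * \<bar>dv\<bar> \<le> L * norm (a - b)"
      using \<open>\<bar>dv\<bar> \<le> norm (a - b)\<close> assms by (intro mult_left_mono) (auto simp: L_def)
    ultimately show ?thesis using \<open>\<bar>dv\<bar> \<le> norm (a - b)\<close> \<open>\<bar>G\<bar> \<le> L * \<bar>dv\<bar>\<close> by (simp add: algebra_simps)
  qed
  finally show ?thesis unfolding L_def .
qed

lemma truncated_solution_exists:
  assumes "1 < p" "0 < T" "0 \<le> M"
  obtains phi d1 where "phi 0 = 0" "d1 0 = \<alpha>"
    "\<And>t. t \<in> {0..T} \<Longrightarrow> (phi has_real_derivative d1 t) (at t within {0..T})"
    "\<And>t. t \<in> {0..T} \<Longrightarrow>
      (d1 has_real_derivative t / 2 * d1 t - gam p * phi t - min \<bar>d1 t\<bar> M powr p) (at t within {0..T})"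
proof -
  define L where "L = 1 + T / 2 + \<bar>gam p\<bar> + p * M powr (p - 1)"
  have "0 < L" using assms by (simp add: L_def add_pos_nonneg)
  have "0 < p" using assms(1) by simp
  have lip: "\<And>s a b. s \<in> {0..T} \<Longrightarrow>
      norm (truncated_field p M s a - truncated_field p M s b) \<le> L * norm (a - b)"
    unfolding L_def using assms by (intro truncated_field_lipschitz) auto
  have cont: "continuous_on {0..T} (\<lambda>s. truncated_field p M s (w s))" if "continuous_on {0..T} w" for w
  proof -
    have c_powr: "continuous_on {0..T} (\<lambda>s. min \<bar>snd (w s)\<bar> M powr p)"
      using that by (intro continuous_on_powr' continuous_intros) (use \<open>0 < p\<close> \<open>0 \<le> M\<close> in auto)
    have c_lin: "continuous_on {0..T} (\<lambda>s. s / 2 * snd (w s) - gam p * fst (w s))"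
      using that by (intro continuous_intros) auto
    have c_snd: "continuous_on {0..T} (\<lambda>s. snd (w s))" using that by (intro continuous_intros)
    show ?thesis
      using continuous_on_Pair[OF c_snd continuous_on_diff[OF c_lin c_powr]] unfolding truncated_field_def .
  qed
  obtain x where x0: "x 0 = (0, \<alpha>)"
    and x: "\<And>t. t \<in> {0..T} \<Longrightarrow> (x has_vector_derivative truncated_field p M t (x t)) (at t within {0..T})"
    using lipschitz_ode_solution_exists[OF \<open>0 < T\<close> \<open>0 < L\<close> lip cont] by blast
  show ?thesis
  proof
    show "fst (x 0) = 0" "snd (x 0) = \<alpha>" using x0 by simp_all
  next
    fix t assume "t \<in> {0..T}"
    from has_vector_derivative_fst[OF x[OF this]] has_vector_derivative_snd[OF x[OF this]]
    show "((\<lambda>t. fst (x t)) has_real_derivative snd (x t)) (at t within {0..T})"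
      "((\<lambda>t. snd (x t)) has_real_derivative t / 2 * snd (x t) - gam p * fst (x t) - min \<bar>snd (x t)\<bar> M powr p)
        (at t within {0..T})"
      by (simp_all add: truncated_field_def has_real_derivative_iff_has_vector_derivative)
  qed
qed

lemma is_sol_if_truncation_inactive:
  assumes "0 < z" "z \<le> T" "phi 0 = 0" "d1 0 = \<alpha>"
    and phi': "\<And>t. t \<in> {0..T} \<Longrightarrow> (phi has_real_derivative d1 t) (at t within {0..T})"
    and d1': "\<And>t. t \<in> {0..T} \<Longrightarrow> (d1 has_real_derivative d2 t) (at t within {0..T})"
    and d2: "\<And>t. d2 t = t / 2 * d1 t - gam p * phi t - min \<bar>d1 t\<bar> M powr p"
    and inactive: "\<And>t. 0 \<le> t \<Longrightarrow> t < z \<Longrightarrow> \<bar>d1 t\<bar> < M"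
  shows "is_sol p \<alpha> (ereal z) phi d1 d2"
  unfolding is_sol_def
proof (intro conjI ballI impI)
  fix y assume y: "y \<in> Ivl (ereal z)"
  have sub: "Ivl (ereal z) \<subseteq> {0..T}" using \<open>z \<le> T\<close> by (auto simp: Ivl_ereal)
  show "(phi has_real_derivative d1 y) (at y within Ivl (ereal z))"
    using has_field_derivative_subset[OF phi' sub] y sub by blast
  show "(d1 has_real_derivative d2 y) (at y within Ivl (ereal z))"
    using has_field_derivative_subset[OF d1' sub] y sub by blast
  have "min \<bar>d1 y\<bar> M = \<bar>d1 y\<bar>" using inactive[of y] y by (auto simp: Ivl_ereal)
  then show "d2 y = y / 2 * d1 y - gam p * phi y - \<bar>d1 y\<bar> powr p" by (simp add: d2)
qed (use assms(1,3,4) in auto)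

text \<open>The truncation level M exceeds the a priori bound of d1_le_exp, so the truncation never
  becomes active.\<close>
lemma is_sol_exists_finite:
  assumes p: "1 < p" and \<alpha>: "0 < \<alpha>" "\<alpha> powr (p - 1) < small_threshold p" and "0 < T"
  shows "\<exists>phi d1 d2. is_sol p \<alpha> (ereal T) phi d1 d2"
proof -
  define M where "M = \<alpha> * exp ((1 + T / 2 + \<bar>gam p\<bar>) * T) + 1"
  have "0 \<le> M" using \<alpha> by (simp add: M_def add_nonneg_nonneg)
  obtain phi d1 where phi_0: "phi 0 = 0" and d1_0: "d1 0 = \<alpha>"
    and phi': "\<And>t. t \<in> {0..T} \<Longrightarrow> (phi has_real_derivative d1 t) (at t within {0..T})"
    and d1': "\<And>t. t \<in> {0..T} \<Longrightarrow>
      (d1 has_real_derivative t / 2 * d1 t - gam p * phi t - min \<bar>d1 t\<bar> M powr p) (at t within {0..T})"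
    using truncated_solution_exists[OF p \<open>0 < T\<close> \<open>0 \<le> M\<close>] by blast
  define d2 where "d2 t = t / 2 * d1 t - gam p * phi t - min \<bar>d1 t\<bar> M powr p" for t
  note sol_until = is_sol_if_truncation_inactive[OF _ _ phi_0 d1_0 phi' d1'[folded d2_def] d2_def]
  have "continuous_on {0..T} d1" using d1' by (rule DERIV_continuous_on)
  have "0 < M - \<bar>d1 t\<bar>" if "t \<in> {0..T}" for t
  proof (rule pos_if_no_first_zero[of 0 t "\<lambda>t. M - \<bar>d1 t\<bar>"])
    have "continuous_on {0..t} d1"
      using continuous_on_subset[OF \<open>continuous_on {0..T} d1\<close>, of "{0..t}"] that by simp
    then show "continuous_on {0..t} (\<lambda>t. M - \<bar>d1 t\<bar>)" by (intro continuous_intros)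
    have "1 \<le> exp ((1 + T / 2 + \<bar>gam p\<bar>) * T)" using \<open>0 < T\<close> by simp
    then have "\<alpha> * 1 \<le> \<alpha> * exp ((1 + T / 2 + \<bar>gam p\<bar>) * T)" using \<alpha> by (intro mult_left_mono) auto
    then show "0 < M - \<bar>d1 0\<bar>" unfolding M_def d1_0 abs_of_pos[OF \<alpha>(1)] by linarith
  next
    fix z assume z: "0 < z" "z \<le> t" "M - \<bar>d1 z\<bar> = 0"
      and before: "\<And>s. 0 \<le> s \<Longrightarrow> s < z \<Longrightarrow> 0 < M - \<bar>d1 s\<bar>"
    interpret small_sol p \<alpha> "ereal z" phi d1 d2
      using sol_until[of z] z that before \<alpha> p by unfold_locales auto
    have "\<bar>d1 s\<bar> \<le> M - 1" if "s \<in> {0..<z}" for s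
      using d1_le_exp[of s T] d1_pos[of s] that z \<open>t \<in> {0..T}\<close> by (simp add: Ivl_ereal M_def)
    moreover have "continuous_on (closure {0..<z}) (\<lambda>s. \<bar>d1 s\<bar>)"
      using continuous_on_subset[OF \<open>continuous_on {0..T} d1\<close>, of "{0..z}"] z that
      by (auto intro: continuous_intros)
    ultimately have "\<bar>d1 z\<bar> \<le> M - 1"
      using continuous_le_on_closure[of "{0..<z}" "\<lambda>s. \<bar>d1 s\<bar>" z "M - 1"] z(1) by simp
    then show False using z(3) by simp
  qed (use that in auto)
  then show ?thesis using sol_until[of T] \<open>0 < T\<close> by auto
qed

lemma has_real_derivative_Ivl_infinity_transfer:
  assumes "(g has_real_derivative D) (at y within Ivl (ereal r))" "0 \<le> y" "y < r"
    and agree: "\<And>x. 0 \<le> x \<Longrightarrow> x < r \<Longrightarrow> f x = g x"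
  shows "(f has_real_derivative D) (at y within Ivl \<infinity>)"
proof -
  have "at y within Ivl (ereal r) = at y within Ivl \<infinity>"
    by (rule at_within_nhd[of _ "{..<r}"]) (use assms(2,3) in \<open>auto simp: Ivl_ereal Ivl_infinity\<close>)
  then have "(g has_real_derivative D) (at y within Ivl \<infinity>)" using assms(1) by simp
  then show ?thesis
    by (rule has_field_derivative_transform_within[of _ _ _ _ "r - y"])
      (use assms(2,3) agree in \<open>auto simp: Ivl_infinity dist_real_def\<close>)
qed

lemma is_sol_infinity_if_finite:
  assumes p: "1 < p" and finite: "\<And>T. 0 < T \<Longrightarrow> \<exists>phi d1 d2. is_sol p \<alpha> (ereal T) phi d1 d2"
  shows "\<exists>phi d1 d2. is_sol p \<alpha> \<infinity> phi d1 d2"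
proof -
  have "\<forall>n::nat. \<exists>s. is_sol p \<alpha> (ereal (real n + 1)) (fst s) (fst (snd s)) (snd (snd s))"
  proof
    fix n :: nat
    obtain phi d1 d2 where "is_sol p \<alpha> (ereal (real n + 1)) phi d1 d2" using finite[of "real n + 1"] by auto
    then show "\<exists>s. is_sol p \<alpha> (ereal (real n + 1)) (fst s) (fst (snd s)) (snd (snd s))"
      by (intro exI[of _ "(phi, d1, d2)"]) simp
  qed
  then obtain S where S: "\<And>n::nat. is_sol p \<alpha> (ereal (real n + 1)) (fst (S n)) (fst (snd (S n))) (snd (snd (S n)))"
    by metis
  define Phi Psi Dd where "Phi n = fst (S n)" and "Psi n = fst (snd (S n))" and "Dd n = snd (snd (S n))" for n
  have sols: "is_sol p \<alpha> (ereal (real n + 1)) (Phi n) (Psi n) (Dd n)" for n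
    unfolding Phi_def Psi_def Dd_def by (rule S)
  define N where "N y = nat \<lceil>y\<rceil>" for y :: real
  have N: "0 \<le> y \<Longrightarrow> y < real (N y) + 1" for y by (simp add: N_def) linarith
  define phi d1 d2 where "phi y = Phi (N y) y" and "d1 y = Psi (N y) y" and "d2 y = Dd (N y) y" for y
  have agree: "phi x = Phi n x \<and> d1 x = Psi n x" if "0 \<le> x" "x < real n + 1" for x n
    using is_sol_unique[OF p sols[of "N x"] sols[of n]] N[of x] that by (simp add: phi_def d1_def Ivl_ereal)
  have "is_sol p \<alpha> \<infinity> phi d1 d2"
    unfolding is_sol_def
  proof (intro conjI ballI impI)
    fix y assume "y \<in> Ivl \<infinity>"
    then have "0 \<le> y" by (simp add: Ivl_infinity)
    then have "y < real (N y) + 1" "y \<in> Ivl (ereal (real (N y) + 1))" using N by (simp_all add: Ivl_ereal)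
    interpret ode_sol p \<alpha> "ereal (real (N y) + 1)" "Phi (N y)" "Psi (N y)" "Dd (N y)"
      using p sols by unfold_locales
    show "(phi has_real_derivative d1 y) (at y within Ivl \<infinity>)"
      using has_real_derivative_Ivl_infinity_transfer[OF phi_deriv_within \<open>0 \<le> y\<close>] agree
        \<open>y \<in> Ivl (ereal (real (N y) + 1))\<close> \<open>y < real (N y) + 1\<close> by (simp add: d1_def)
    show "(d1 has_real_derivative d2 y) (at y within Ivl \<infinity>)"
      using has_real_derivative_Ivl_infinity_transfer[OF d1_deriv_within \<open>0 \<le> y\<close>] agree
        \<open>y \<in> Ivl (ereal (real (N y) + 1))\<close> \<open>y < real (N y) + 1\<close> by (simp add: d2_def)
    assume "0 < y"
    then show "d2 y = y / 2 * d1 y - gam p * phi y - \<bar>d1 y\<bar> powr p"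
      using d2_eq_rhs \<open>y \<in> Ivl (ereal (real (N y) + 1))\<close> by (simp add: d2_def phi_def d1_def rhs_def)
  next
    interpret ode_sol p \<alpha> "ereal 1" "Phi 0" "Psi 0" "Dd 0" using p sols[of 0] by unfold_locales simp_all
    show "phi 0 = 0" "d1 0 = \<alpha>" using phi_0 d1_0 by (simp_all add: phi_def d1_def N_def)
  qed simp
  then show ?thesis by blast
qed

section \<open>Maximal solutions\<close>

lemma max_sol_global:
  assumes "1 < p" "is_sol p \<alpha> \<infinity> psi e1 e2" "is_max_sol p \<alpha> R phi d1 d2"
  shows "R = \<infinity>"
proof (rule ccontr)
  assume "R \<noteq> \<infinity>"
  have "is_sol p \<alpha> R phi d1 d2" using assms(3) by (simp add: is_max_sol_def)
  then have "\<forall>y\<in>Ivl R. psi y = phi y"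
    using is_sol_unique[OF assms(1,2)] Ivl_nonneg by (auto simp: Ivl_infinity)
  moreover have "R < \<infinity>" using \<open>R \<noteq> \<infinity>\<close> by (simp add: less_top)
  ultimately show False using assms(2,3) unfolding is_max_sol_def by blast
qed

lemma max_sol_exists:
  assumes "1 < p" "0 < \<alpha>" "\<alpha> powr (p - 1) < small_threshold p"
  shows "\<exists>phi d1 d2. is_max_sol p \<alpha> \<infinity> phi d1 d2"
  using is_sol_infinity_if_finite[OF assms(1) is_sol_exists_finite[OF assms]] by (simp add: is_max_sol_def)

lemma max_sol_profile:
  assumes "1 < p" "0 < \<alpha>" "\<alpha> powr (p - 1) < small_threshold p" and max: "is_max_sol p \<alpha> R phi d1 d2"
  shows "R = \<infinity> \<and> (\<forall>y>0. phi y > 0 \<and> d1 y > 0) \<and>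
    (\<exists>Rb>0. (\<forall>y. 0 \<le> y \<and> y < Rb \<longrightarrow> d2 y < 0) \<and> (\<forall>y>Rb. d2 y > 0))"
proof -
  obtain psi e1 e2 where "is_max_sol p \<alpha> \<infinity> psi e1 e2" using max_sol_exists[OF assms(1-3)] by blast
  then have "R = \<infinity>" using max_sol_global[OF assms(1) _ max] by (simp add: is_max_sol_def)
  interpret small_sol p \<alpha> \<infinity> phi d1 d2
    using max \<open>R = \<infinity>\<close> assms by unfold_locales (auto simp: is_max_sol_def)
  have "turn_point p \<alpha> \<in> Ivl \<infinity>" using turn_point_pos[OF assms(1,2)] by (simp add: Ivl_infinity)
  then obtain Rb where "0 < Rb" "\<And>y. 0 \<le> y \<Longrightarrow> y < Rb \<Longrightarrow> d2 y < 0" "\<And>y. y \<in> Ivl \<infinity> \<Longrightarrow> Rb < y \<Longrightarrow> 0 < d2 y"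
    using d2_sign_change by blast
  then show ?thesis using \<open>R = \<infinity>\<close> phi_pos d1_pos by (auto simp: Ivl_infinity)
qed

lemma max_sol_small_alpha:
  assumes "1 < p" "0 < \<alpha>" "\<alpha> powr (p - 1) < small_threshold p"
  shows "(\<exists>R phi d1 d2. is_max_sol p \<alpha> R phi d1 d2) \<and>
    (\<forall>R phi d1 d2. is_max_sol p \<alpha> R phi d1 d2 \<longrightarrow> R = \<infinity> \<and> (\<forall>y>0. phi y > 0 \<and> d1 y > 0) \<and>
      (\<exists>Rb>0. (\<forall>y. 0 \<le> y \<and> y < Rb \<longrightarrow> d2 y < 0) \<and> (\<forall>y>Rb. d2 y > 0)))"
  using max_sol_exists[OF assms] max_sol_profile[OF assms] by fast

theorem proposition7p1:
  fixes p :: real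
  assumes "p > 1"
  shows "\<exists>\<alpha>0>0. \<forall>\<alpha>. 0 < \<alpha> \<and> \<alpha> < \<alpha>0 \<longrightarrow>
           (\<exists>R phi d1 d2. is_max_sol p \<alpha> R phi d1 d2) \<and>
           (\<forall>R phi d1 d2. is_max_sol p \<alpha> R phi d1 d2 \<longrightarrow>
              R = \<infinity> \<and>
              (\<forall>y>0. phi y > 0 \<and> d1 y > 0) \<and>
              (\<exists>Rb>0. (\<forall>y. 0 \<le> y \<and> y < Rb \<longrightarrow> d2 y < 0) \<and> (\<forall>y>Rb. d2 y > 0)))"
proof -
  define \<alpha>0 where "\<alpha>0 = small_threshold p powr (1 / (p - 1))"
  have "0 < \<alpha>0" using small_threshold_pos[OF assms] by (simp add: \<alpha>0_def)
  have small: "\<alpha> powr (p - 1) < small_threshold p" if "0 < \<alpha>" "\<alpha> < \<alpha>0" for \<alpha>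
  proof -
    have "\<alpha> powr (p - 1) < \<alpha>0 powr (p - 1)" using that assms by (intro powr_less_mono2) auto
    then show ?thesis using assms small_threshold_pos[OF assms] by (simp add: \<alpha>0_def powr_powr)
  qed
  show ?thesis
    by (intro exI[of _ \<alpha>0] conjI[OF \<open>0 < \<alpha>0\<close>] allI impI max_sol_small_alpha[OF assms])
      (use small in auto)
qed

end
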